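(* Let $m\ge 2$. Then: (1) If an arithmetic box space $\square_{(G_m(N_k))_k}G_m$ has property $D_\alpha$ for some $\alpha\in(0,1]$, then $\alpha\le \tfrac12$. (2) There exists an arithmetic box space of $G_m$ with property $D_{1/2}$; for instance the one given by $N_k=(m^2-1)^k$, for which $\operatorname{ord}_m(N_k)=2(m^2-1)^{k-1}$ for all $k\ge1$. (3) There exists an arithmetic box space of $G_m$ which does not have property $D_\alpha$ for any $\alpha\in(0,1/2]$; for instance the one given by $N_k=m^{2^k}-1$. (4) Fix $\alpha<1$. Every arithmetic box space $\square_{(G_m(N_k))_k}G_m$ is covered by some box space of $G_m$ having property $D_\alpha$, i.e. there is a box space $\square_{(M_k)}G_m$ with property $D_\alpha$ and $M_k\subseteq G_m(N_k)$ for all $k$.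
   Context: Fix an integer $m\ge 2$. Let $G_m$ be the subgroup of $GL_2(\mathbb Z[1/m])$ consisting of all matrices $\begin{pmatrix} m^k & r\\ 0&1\end{pmatrix}$ with $k\in\mathbb Z$, $r\in\mathbb Z[1/m]$; it is generated by $A=\begin{pmatrix}1&1\\0&1\end{pmatrix}$ and $T=\begin{pmatrix}m&0\\0&1\end{pmatrix}$ and is isomorphic to $BS(1,m)=\langle a,t\mid tat^{-1}=a^m\rangle$ via $a\mapsto A$, $t\mapsto T$. For an integer $N\ge1$ coprime to $m$, $G_m(N)$ denotes the kernel of the reduction map $G_m\to GL_2(\mathbb Z/N\mathbb Z)$ (using $\mathbb Z[1/m]/N\mathbb Z[1/m]\cong\mathbb Z/N\mathbb Z$), and $\operatorname{ord}_m(N)$ denotes the multiplicative order of $m$ modulo $N$. For a finitely generated residually finite group $G$ with finite generating set $S$ and a decreasing sequence $(H_k)_{k\ge1}$ of finite-index normal subgroups with trivial intersection, the box space $\square_{(H_k)}G$ is the family of finite Cayley graphs $\mathrm{Cay}(G/H_k,S)$. For $0<\alpha\le1$, the box space has property $D_\alpha$ if there is $C>0$ with $\operatorname{diam}\mathrm{Cay}(G/H_k,S)\ge C\,|G/H_k|^\alpha$ for all $k$ (this does not depend on $S$). An arithmetic box space of $G_m$ is a box space $\square_{(G_m(N_k))_k}G_m$ where $(N_k)_{k\ge1}$ is a strictly increasing sequence of integers $\ge2$ coprime to $m$ with $N_k\mid N_{k+1}$ for all $k$ (generating set $\{A,T\}$). A box space $\square_{(H'_k)}G$ covers $\square_{(H_k)}G$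 if $H'_k\subseteq H_k$ for all $k$. *)

theory Defs
  imports Complex_Main "HOL-Algebra.Coset" "HOL-Number_Theory.Pocklington"
begin

text \<open>Edges are undirected, so the
  generators and their inverses are allowed.\<close>
definition cay_dist :: "('a, 'b) monoid_scheme \<Rightarrow> 'a set \<Rightarrow> 'a set \<Rightarrow> 'a set \<Rightarrow> 'a set \<Rightarrow> nat" where
  "cay_dist G S H c d =
     (LEAST n. \<exists>ws. length ws = n \<and> set ws \<subseteq> S \<union> m_inv G ` S \<and>
                    r_coset G c (foldr (monoid.mult G) ws (monoid.one G)) = d)"

definition cay_diam :: "('a, 'b) monoid_scheme \<Rightarrow> 'a set \<Rightarrow> 'a set \<Rightarrow> nat" where
  "cay_diam G S H = Max {cay_dist G S H c d | c d. c \<in> RCOSETS G H \<and> d \<in> RCOSETS G H}"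

definition box_space :: "('a, 'b) monoid_scheme \<Rightarrow> (nat \<Rightarrow> 'a set) \<Rightarrow> bool" where
  "box_space G H \<longleftrightarrow>
     group G \<and>
     (\<forall>k\<ge>1. normal (H k) G \<and> finite (RCOSETS G (H k)) \<and> H (Suc k) \<subseteq> H k) \<and>
     (\<Inter>k\<in>{1..}. H k) = {monoid.one G}"

definition property_D :: "('a, 'b) monoid_scheme \<Rightarrow> 'a set \<Rightarrow> (nat \<Rightarrow> 'a set) \<Rightarrow> real \<Rightarrow> bool" where
  "property_D G S H \<alpha> \<longleftrightarrow>
     (\<exists>C>0. \<forall>k\<ge>1. real (cay_diam G S (H k)) \<ge> C * real (card (RCOSETS G (H k))) powr \<alpha>)"

definition Zinv :: "nat \<Rightarrow> rat set" where
  "Zinv m = {r. \<exists>a::int. \<exists>j::nat. r = of_int a / of_nat m ^ j}"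

text \<open>G_m: the matrix (m^k, r; 0, 1) is represented by the pair (k, r);
  the multiplication is the matrix multiplication
  (m^k, r; 0,1)(m^l, s; 0,1) = (m^(k+l), m^k s + r; 0, 1).\<close>
definition Gm :: "nat \<Rightarrow> (int \<times> rat) monoid" where
  "Gm m = \<lparr> carrier = {(k, r). r \<in> Zinv m},
            monoid.mult = (\<lambda>(k, r) (l, s). (k + l, (of_nat m) powi k * s + r)),
            monoid.one = (0, 0) \<rparr>"

text \<open>The generators A = (1,1;0,1) and T = (m,0;0,1).\<close>
definition genA :: "int \<times> rat" where "genA = (0, 1)"
definition genT :: "int \<times> rat" where "genT = (1, 0)"

text \<open>Reduction Z[1/m] -> Z/NZ (via Z[1/m]/N Z[1/m] = Z/NZ), with values in {0..N-1}.\<close>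
definition red :: "nat \<Rightarrow> nat \<Rightarrow> rat \<Rightarrow> int" where
  "red m N x = (THE c. 0 \<le> c \<and> c < int N \<and> (\<exists>y\<in>Zinv m. x - of_int c = of_nat N * y))"

text \<open>G_m(N): the kernel of the reduction map G_m -> GL_2(Z/NZ), i.e. the elements whose
  reduced matrix (red(m^k), red(r); 0, 1) is the identity matrix.\<close>
definition Gm_cong :: "nat \<Rightarrow> nat \<Rightarrow> (int \<times> rat) set" where
  "Gm_cong m N = {(k, r) \<in> carrier (Gm m).
      red m N ((of_nat m) powi k) = red m N 1 \<and> red m N r = red m N 0}"

definition arith_seq :: "nat \<Rightarrow> (nat \<Rightarrow> nat) \<Rightarrow> bool" where
  "arith_seq m N \<longleftrightarrow>
     (\<forall>k\<ge>1. 2 \<le> N k \<and> coprime (N k) m \<and> N k < N (Suc k) \<and> N k dvd N (Suc k))"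

abbreviation arith_box :: "nat \<Rightarrow> (nat \<Rightarrow> nat) \<Rightarrow> nat \<Rightarrow> (int \<times> rat) set" where
  "arith_box m N \<equiv> (\<lambda>k. Gm_cong m (N k))"

end

theory Submission
  imports Defs "HOL-Real_Asymp.Real_Asymp"
begin

text \<open>The quotient \<open>G\<^sub>m / G\<^sub>m(N)\<close> has \<open>ord\<^sub>N(m) \<cdot> N\<close> elements, and its Cayley diameter lies
  between \<open>ord\<^sub>N(m) / 2\<close> and \<open>ord\<^sub>N(m) + O(log N)\<close>: the exponent of \<open>T\<close> is only
  determined modulo \<open>ord\<^sub>N(m)\<close> and every generator changes it by at most one, while the
  translation part of a coset is reached by a word spelling out its base-\<open>m\<close> digits.
  Since \<open>ord\<^sub>N(m) \<le> N\<close>, the diameter is at most the square root of the index plus a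
  logarithm, which rules out \<open>D\<^sub>\<alpha>\<close> for \<open>\<alpha> > 1/2\<close>. Lifting the exponent shows that \<open>m\<close>
  has order \<open>2 (m\<^sup>2 - 1)\<^bsup>k-1\<^esup>\<close> modulo \<open>(m\<^sup>2 - 1)\<^sup>k\<close>, about the square root of the index,
  whereas modulo \<open>m\<^bsup>2\<^sup>k\<^esup> - 1\<close> its order is at most \<open>2\<^sup>k\<close>, so there the diameter is only
  logarithmic. Finally, replacing \<open>ord\<^sub>N(m)\<close> by a fast-growing multiple \<open>L\<close> gives normal
  subgroups of index \<open>L N\<close> and diameter at least \<open>L / 2\<close>.\<close>

section \<open>Number-theoretic preliminaries\<close>

lemma ord_dvd_iff_dvd_power_sub_one:
  "ord n a dvd d \<longleftrightarrow> int n dvd int a ^ d - 1"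
  unfolding ord_divides[symmetric] cong_iff_dvd_diff[symmetric] cong_int_iff[symmetric] by simp

lemma one_le_ord:
  fixes n a :: nat
  shows "coprime n a \<Longrightarrow> 1 \<le> ord n a"
  using ord_eq_0[of n a] by (simp add: Suc_le_eq gr0I)

lemma ord_le_modulus:
  assumes "coprime n a" "0 < n"
  shows "ord n a \<le> n"
proof -
  have "ord n a dvd totient n" using order_divides_totient[OF assms(1)] .
  hence "ord n a \<le> totient n" using assms(2) by (intro dvd_imp_le) auto
  thus ?thesis using totient_le[of n] by linarith
qed

lemma ord_power_sub_one_le:
  fixes a n :: nat
  assumes "0 < a" "0 < n"
  shows "ord (a ^ n - 1) a \<le> n"
proof (rule dvd_imp_le)
  show "ord (a ^ n - 1) a dvd n"
    using assms(1) by (simp add: ord_dvd_iff_dvd_power_sub_one of_nat_diff)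
qed (rule assms(2))

lemma half_modulus_le_abs:
  fixes a :: int
  assumes "int L dvd a - int (L div 2)"
  shows "int (L div 2) \<le> \<bar>a\<bar>"
proof -
  obtain t where t: "a - int (L div 2) = int L * t" using assms by blast
  show ?thesis
  proof (cases "t \<ge> 0")
    case True
    hence "int L * t \<ge> 0" by simp
    thus ?thesis using t by linarith
  next
    case False
    hence "int L * t \<le> int L * (-1)" by (intro mult_left_mono) auto
    thus ?thesis using t by linarith
  qed
qed

lemma eq_0_if_dvd_unbounded:
  fixes a :: int and d :: "nat \<Rightarrow> nat"
  assumes dvd: "\<And>k. k \<ge> 1 \<Longrightarrow> int (d k) dvd a" and large: "\<And>k. k \<ge> 1 \<Longrightarrow> k < d k"
  shows "a = 0"
proof (rule ccontr)
  assume "a \<noteq> 0"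
  define k where "k = nat \<bar>a\<bar> + 1"
  have "int (d k) \<le> \<bar>a\<bar>" using dvd_imp_le_int[OF \<open>a \<noteq> 0\<close> dvd] by (simp add: k_def)
  moreover have "k < d k" using large by (simp add: k_def)
  ultimately show False unfolding k_def by linarith
qed

lemma one_plus_power_cong:
  fixes a :: int
  shows "[(1 + a) ^ i = 1 + int i * a] (mod a^2)"
proof (induction i)
  case 0 thus ?case by simp
next
  case (Suc i)
  have "[(1 + a) * (1 + a) ^ i = (1 + a) * (1 + int i * a)] (mod a^2)"
    by (rule cong_mult[OF cong_refl Suc])
  moreover have "(1 + a) * (1 + int i * a) = (1 + int (Suc i) * a) + a^2 * int i"
    by (simp add: algebra_simps power2_eq_square)
  moreover have "[(1 + int (Suc i) * a) + a^2 * int i = 1 + int (Suc i) * a] (mod a^2)"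
    by (simp add: cong_iff_dvd_diff)
  ultimately show ?case by (metis power_Suc cong_trans)
qed

lemma dvd_square_sum_lessThan:
  assumes "odd q \<or> 4 dvd q"
  shows "int q dvd (\<Sum>i<q. int i)^2"
proof -
  have gauss: "2 * (\<Sum>i<n. int i) = int n * (int n - 1)" for n
    by (induction n) (auto simp: algebra_simps)
  from assms show ?thesis
  proof
    assume "odd q"
    then obtain c where "q = 2 * c + 1" using oddE by blast
    hence "(\<Sum>i<q. int i) = int q * int c" using gauss[of q] by simp
    thus ?thesis by (simp add: power2_eq_square)
  next
    assume "4 dvd q"
    then obtain c where c: "q = 4 * c" by blast
    have S: "(\<Sum>i<q. int i) = 2 * int c * (int q - 1)" using gauss[of q] c by simp
    have "(2 * int c * (int q - 1))^2 = int q * (int c * (int q - 1)^2)"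
      by (simp add: c power2_eq_square algebra_simps)
    thus ?thesis unfolding S by simp
  qed
qed

text \<open>Modulo \<open>(q b)\<^sup>2\<close> the geometric sum is \<open>q + q b T\<close> with \<open>T = \<Sum>i<q. i\<close>; the cofactor
  \<open>v\<close> of \<open>q\<close> then satisfies \<open>v (1 - b T) \<equiv> 1\<close> modulo any common divisor of \<open>v\<close> and \<open>q\<close>,
  because such a divisor divides \<open>T\<^sup>2\<close>.\<close>
lemma geometric_sum_exact:
  fixes x b :: int and q :: nat
  assumes xb: "x - 1 = int q * b" and q: "odd q \<or> 4 dvd q"
  shows "\<exists>v. (\<Sum>i<q. x^i) = int q * v \<and> coprime v (int q)"
proof -
  define a where "a = int q * b"
  define T where "T = (\<Sum>i<q. int i)"
  have "x = 1 + a" using xb by (simp add: a_def)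
  hence "[(\<Sum>i<q. x^i) = (\<Sum>i<q. 1 + int i * a)] (mod a^2)"
    by (auto intro: cong_sum one_plus_power_cong)
  moreover have "(\<Sum>i<q. 1 + int i * a) = int q + a * T"
    by (simp add: T_def sum.distrib sum_distrib_left mult.commute)
  ultimately obtain t where t: "(\<Sum>i<q. x^i) = int q + a * T + a^2 * t"
    by (metis cong_iff_lin cong_sym)
  define v where "v = 1 + b * T + int q * b^2 * t"
  have S: "(\<Sum>i<q. x^i) = int q * v"
    unfolding t v_def a_def by (simp add: algebra_simps power2_eq_square)
  have "coprime v (int q)"
  proof (rule coprimeI)
    fix c assume cv: "c dvd v" and cq: "c dvd int q"
    have "c dvd T^2" using cq dvd_square_sum_lessThan[OF q] unfolding T_def by (rule dvd_trans)
    hence "c dvd v * (1 - b * T) + b^2 * T^2 - int q * (b^2 * t * (1 - b * T))"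
      using cv cq by (intro dvd_diff dvd_add) auto
    also have "v * (1 - b * T) + b^2 * T^2 - int q * (b^2 * t * (1 - b * T)) = 1"
      unfolding v_def by (simp add: algebra_simps power2_eq_square)
    finally show "is_unit c" by simp
  qed
  thus ?thesis using S by blast
qed

lemma power_sub_one_exact:
  fixes x u :: int and q :: nat
  assumes xu: "x - 1 = int q * u" and u: "coprime u (int q)" and q: "odd q \<or> 4 dvd q"
  shows "\<exists>v. x ^ q ^ j - 1 = int q ^ Suc j * v \<and> coprime v (int q)"
proof (induction j)
  case 0 thus ?case using xu u by auto
next
  case (Suc j)
  then obtain v where v: "x ^ q ^ j - 1 = int q ^ Suc j * v" "coprime v (int q)" by blast
  define y where "y = x ^ q ^ j"
  have "y - 1 = int q * (int q ^ j * v)" using v(1) by (simp add: y_def)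
  then obtain w where w: "(\<Sum>i<q. y^i) = int q * w" "coprime w (int q)"
    using geometric_sum_exact q by blast
  have "x ^ q ^ Suc j - 1 = y ^ q - 1" unfolding y_def by (metis power_Suc power_mult mult.commute)
  also have "\<dots> = (y - 1) * (\<Sum>i<q. y^i)" by (rule power_diff_1_eq)
  also have "\<dots> = int q ^ Suc (Suc j) * (v * w)" using v(1) w(1) by (simp add: y_def algebra_simps)
  finally show ?case using v(2) w(2) by auto
qed

lemma dvd_exponent_if_dvd_power_sub_one:
  fixes x u :: int and q :: nat
  assumes xu: "x - 1 = int q ^ k * u" and u: "coprime u (int q)" and "k \<ge> 1" "q > 0"
    and dvd: "int q ^ Suc k dvd x ^ e - 1"
  shows "q dvd e"
proof -
  have "x ^ e - 1 = int q ^ k * (u * (\<Sum>i<e. x^i))"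
    using power_diff_1_eq[of x e] xu by simp
  hence "int q ^ k * int q dvd int q ^ k * (u * (\<Sum>i<e. x^i))"
    using dvd by (simp add: mult.commute)
  hence "int q dvd u * (\<Sum>i<e. x^i)" using \<open>q > 0\<close> by simp
  hence "int q dvd (\<Sum>i<e. x^i)"
    using u by (simp add: coprime_commute coprime_dvd_mult_right_iff)
  moreover have "[x = 1] (mod int q)"
    using xu \<open>k \<ge> 1\<close> by (simp add: cong_iff_dvd_diff power_eq_if)
  hence "[(\<Sum>i<e. x^i) = (\<Sum>i<e. 1)] (mod int q)"
    by (intro cong_sum) (simp add: cong_pow[of x 1, simplified])
  ultimately have "int q dvd int e" by (simp add: cong_dvd_iff)
  thus ?thesis by simp
qed

lemma ord_power_modulus:
  fixes a q :: nat and u :: int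
  assumes au: "int a ^ ord q a - 1 = int q * u" and u: "coprime u (int q)"
    and q: "odd q \<or> 4 dvd q" "q > 0" and k: "k \<ge> 1"
  shows "ord (q ^ k) a = ord q a * q ^ (k - 1)"
proof -
  define x where "x = int a ^ ord q a"
  have lte: "\<exists>v. x ^ q ^ j - 1 = int q ^ Suc j * v \<and> coprime v (int q)" for j
    using power_sub_one_exact[OF au[folded x_def] u q(1)] .
  have lower: "ord q a * q ^ (k - 1) dvd d" if "k \<ge> 1" "int q ^ k dvd int a ^ d - 1" for k d
    using that
  proof (induction k arbitrary: d rule: dec_induct)
    case base
    thus ?case by (simp add: ord_dvd_iff_dvd_power_sub_one)
  next
    case (step k)
    have "int q ^ k dvd int a ^ d - 1"
      using step.prems by (rule dvd_trans[rotated]) (simp add: le_imp_power_dvd)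
    then obtain e where e: "d = ord q a * q ^ (k - 1) * e" using step.IH by blast
    obtain v where v: "x ^ q ^ (k - 1) - 1 = int q ^ k * v" "coprime v (int q)"
      using lte[of "k - 1"] step(1) by auto
    have "int a ^ d = (x ^ q ^ (k - 1)) ^ e" by (simp add: e x_def power_mult)
    hence "q dvd e"
      using dvd_exponent_if_dvd_power_sub_one[OF v step(1) q(2)] step.prems by simp
    then obtain e' where "e = q * e'" ..
    moreover have "q ^ (Suc k - 1) = q ^ (k - 1) * q" using step(1) by (cases k) auto
    ultimately show ?case by (simp add: e)
  qed
  obtain v where "x ^ q ^ (k - 1) - 1 = int q ^ k * v" using lte[of "k - 1"] k by auto
  hence "int q ^ k dvd int a ^ (ord q a * q ^ (k - 1)) - 1" by (simp add: x_def power_mult)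
  hence "ord (q ^ k) a dvd ord q a * q ^ (k - 1)"
    by (simp add: ord_dvd_iff_dvd_power_sub_one)
  moreover have "ord q a * q ^ (k - 1) dvd ord (q ^ k) a"
    using lower[OF k] ord_dvd_iff_dvd_power_sub_one[of "q ^ k" a "ord (q ^ k) a"] by simp
  ultimately show ?thesis by (rule dvd_antisym)
qed

lemma coprime_square_sub_one: "0 < m \<Longrightarrow> coprime (m^2 - 1) m" for m :: nat
  using coprime_diff_one_left_nat[of "m^2"] by simp

lemma ord_square_sub_one:
  fixes m :: nat
  assumes "m \<ge> 2"
  shows "ord (m^2 - 1) m = 2"
proof -
  have "[m ^ 2 = 1] (mod m^2 - 1)" using assms by (simp add: cong_altdef_nat)
  hence "ord (m^2 - 1) m dvd 2" by (simp only: ord_divides)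
  moreover have "ord (m^2 - 1) m \<noteq> 1"
  proof
    assume "ord (m^2 - 1) m = 1"
    hence "m^2 - 1 dvd m - 1" using ord[of m "m^2 - 1"] assms by (simp add: cong_altdef_nat)
    moreover have "2 * m \<le> m^2" using mult_le_mono1[OF assms, of m] by (simp add: power2_eq_square)
    hence "m - 1 < m^2 - 1" using assms by linarith
    ultimately show False using assms by (simp add: nat_dvd_not_less)
  qed
  moreover have "ord (m^2 - 1) m \<noteq> 0"
    using coprime_square_sub_one assms by (simp add: ord_eq_0)
  moreover have "ord (m^2 - 1) m \<le> 2" using calculation(1) by (rule dvd_imp_le) simp
  ultimately show ?thesis by linarith
qed

lemma odd_or_four_dvd_square_sub_one:
  fixes m :: nat
  assumes "m \<ge> 1"
  shows "odd (m^2 - 1) \<or> 4 dvd m^2 - 1"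
proof (cases "even m")
  case True thus ?thesis using assms by (simp add: power2_eq_square)
next
  case False
  then obtain k where "m = 2 * k + 1" using oddE by blast
  hence "m^2 - 1 = 4 * (k * (k + 1))" by (simp add: power2_eq_square algebra_simps)
  thus ?thesis by simp
qed

lemma ord_power_square_sub_one:
  fixes m :: nat
  assumes "m \<ge> 2" "k \<ge> 1"
  shows "ord ((m^2 - 1) ^ k) m = 2 * (m^2 - 1) ^ (k - 1)"
proof -
  have o: "ord (m^2 - 1) m = 2" using assms(1) by (rule ord_square_sub_one)
  have "int m ^ ord (m^2 - 1) m - 1 = int (m^2 - 1) * 1"
    unfolding o using assms(1) by (simp add: of_nat_diff)
  moreover have "m^2 - 1 > 0"
    using assms(1) one_less_power[of m 2] by simp
  ultimately show ?thesis
    using ord_power_modulus[of m "m^2 - 1" 1 k] odd_or_four_dvd_square_sub_one[of m] assms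
    unfolding o by simp
qed

section \<open>Cayley diameters of finite quotients\<close>

lemma cay_dist_le_length:
  assumes "set ws \<subseteq> S \<union> m_inv G ` S"
    and "r_coset G c (foldr (monoid.mult G) ws (monoid.one G)) = d"
  shows "cay_dist G S H c d \<le> length ws"
  unfolding cay_dist_def by (rule Least_le) (use assms in \<open>intro exI[of _ ws]\<close>, simp)

lemma cay_dist_ge:
  assumes "set ws \<subseteq> S \<union> m_inv G ` S"
    and "r_coset G c (foldr (monoid.mult G) ws (monoid.one G)) = d"
    and "\<And>ws. set ws \<subseteq> S \<union> m_inv G ` S \<Longrightarrow>
           r_coset G c (foldr (monoid.mult G) ws (monoid.one G)) = d \<Longrightarrow> B \<le> length ws"
  shows "B \<le> cay_dist G S H c d"
proof -
  define P where "P = (\<lambda>n. \<exists>ws. length ws = n \<and> set ws \<subseteq> S \<union> m_inv G ` S \<and>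
    r_coset G c (foldr (monoid.mult G) ws (monoid.one G)) = d)"
  have "P (length ws)" unfolding P_def using assms(1,2) by blast
  hence "P (Least P)" by (rule LeastI)
  then obtain ws' where ws': "length ws' = Least P" "set ws' \<subseteq> S \<union> m_inv G ` S"
    "r_coset G c (foldr (monoid.mult G) ws' (monoid.one G)) = d"
    unfolding P_def by blast
  have "cay_dist G S H c d = Least P" by (simp add: cay_dist_def P_def)
  thus ?thesis using assms(3)[OF ws'(2,3)] ws'(1) by simp
qed

lemma finite_cay_dists:
  assumes "finite (RCOSETS G H)"
  shows "finite {cay_dist G S H c d | c d. c \<in> RCOSETS G H \<and> d \<in> RCOSETS G H}"
proof -
  have "{cay_dist G S H c d | c d. c \<in> RCOSETS G H \<and> d \<in> RCOSETS G H}
      = (\<lambda>(c, d). cay_dist G S H c d) ` (RCOSETS G H \<times> RCOSETS G H)" by auto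
  thus ?thesis using assms by simp
qed

lemma cay_dist_le_cay_diam:
  assumes "finite (RCOSETS G H)" "c \<in> RCOSETS G H" "d \<in> RCOSETS G H"
  shows "cay_dist G S H c d \<le> cay_diam G S H"
  unfolding cay_diam_def using assms finite_cay_dists by (intro Max_ge) auto

lemma cay_diam_le:
  assumes "finite (RCOSETS G H)" "c \<in> RCOSETS G H"
    and "\<And>c d. c \<in> RCOSETS G H \<Longrightarrow> d \<in> RCOSETS G H \<Longrightarrow> cay_dist G S H c d \<le> B"
  shows "cay_diam G S H \<le> B"
  unfolding cay_diam_def using assms finite_cay_dists by (subst Max_le_iff) auto

lemma not_property_D_if_diam_smallo:
  fixes G :: "('a, 'b) monoid_scheme" and f :: "real \<Rightarrow> real"
  assumes small: "f \<in> o(\<lambda>x. x powr \<alpha>)"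
    and unbounded: "\<And>B. \<exists>k\<ge>1. B < real (card (RCOSETS G (H k)))"
    and diam_le: "\<And>k. k \<ge> 1 \<Longrightarrow> real (cay_diam G S (H k)) \<le> f (real (card (RCOSETS G (H k))))"
  shows "\<not> property_D G S H \<alpha>"
proof
  assume "property_D G S H \<alpha>"
  then obtain C where C: "C > 0"
    and D: "\<And>k. k \<ge> 1 \<Longrightarrow> C * real (card (RCOSETS G (H k))) powr \<alpha> \<le> real (cay_diam G S (H k))"
    unfolding property_D_def by blast
  have "eventually (\<lambda>x. norm (f x) \<le> C / 2 * norm (x powr \<alpha>)) at_top"
    using C by (intro landau_o.smallD[OF small]) simp
  then obtain B where B: "\<And>x. x \<ge> B \<Longrightarrow> \<bar>f x\<bar> \<le> C / 2 * x powr \<alpha>"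
    by (auto simp: eventually_at_top_linorder)
  obtain k where k: "k \<ge> 1" "max B 1 < real (card (RCOSETS G (H k)))"
    using unbounded by blast
  define X where "X = real (card (RCOSETS G (H k)))"
  have "C * X powr \<alpha> \<le> f X" using D[OF k(1)] diam_le[OF k(1)] unfolding X_def by linarith
  also have "\<dots> \<le> C / 2 * X powr \<alpha>" using B[of X] k(2) unfolding X_def by simp
  finally show False using C k(2) unfolding X_def by simp
qed

section \<open>The group \<open>G\<^sub>m\<close> and its level subgroups\<close>

locale BS1m =
  fixes m :: nat
  assumes two_le_m: "2 \<le> m"
begin

abbreviation "G \<equiv> Gm m"
abbreviation "Z \<equiv> Zinv m"

lemma m_ne_0 [simp]: "m \<noteq> 0"
  using two_le_m by simp

lemma Zinv_iff: "x \<in> Z \<longleftrightarrow> (\<exists>a j. x = of_int a / of_nat m ^ j)"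
  by (simp add: Zinv_def)

lemma Zinv_of_int [simp]: "of_int a \<in> Z"
  unfolding Zinv_iff by (rule exI[of _ a], rule exI[of _ 0]) simp

lemma Zinv_of_nat [simp]: "of_nat a \<in> Z"
  using Zinv_of_int[of "int a"] by simp

lemma Zinv_0 [simp]: "0 \<in> Z" and Zinv_1 [simp]: "1 \<in> Z"
  using Zinv_of_int[of 0] Zinv_of_int[of 1] by simp_all

lemma Zinv_add [intro]:
  assumes "x \<in> Z" "y \<in> Z" shows "x + y \<in> Z"
proof -
  obtain a j b l where x: "x = of_int a / of_nat m ^ j" and y: "y = of_int b / of_nat m ^ l"
    using assms unfolding Zinv_iff by blast
  have "x + y = of_int (a * int m ^ l + b * int m ^ j) / of_nat m ^ (j + l)"
    unfolding x y by (simp add: power_add add_frac_eq)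
  thus ?thesis unfolding Zinv_iff by blast
qed

lemma Zinv_mult [intro]:
  assumes "x \<in> Z" "y \<in> Z" shows "x * y \<in> Z"
proof -
  obtain a j b l where x: "x = of_int a / of_nat m ^ j" and y: "y = of_int b / of_nat m ^ l"
    using assms unfolding Zinv_iff by blast
  have "x * y = of_int (a * b) / of_nat m ^ (j + l)"
    unfolding x y by (simp add: field_simps power_add)
  thus ?thesis unfolding Zinv_iff by blast
qed

lemma Zinv_uminus [intro]: "x \<in> Z \<Longrightarrow> - x \<in> Z"
  using Zinv_mult[OF Zinv_of_int[of "-1"]] by simp

lemma Zinv_divide_power [intro]:
  assumes "x \<in> Z" shows "x / of_nat m ^ n \<in> Z"
proof -
  obtain a j where x: "x = of_int a / of_nat m ^ j"
    using assms unfolding Zinv_iff by blast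
  have "x / of_nat m ^ n = of_int a / of_nat m ^ (j + n)"
    unfolding x by (simp add: field_simps power_add)
  thus ?thesis unfolding Zinv_iff by blast
qed

lemma Zinv_power_int [intro]: "(of_nat m :: rat) powi k \<in> Z"
proof (cases "k \<ge> 0")
  case True
  then have "(of_nat m :: rat) powi k = of_nat (m ^ nat k)"
    by (metis of_nat_power power_int_of_nat nat_0_le)
  thus ?thesis by (metis Zinv_of_nat)
next
  case False
  then have "(of_nat m :: rat) powi k = 1 / of_nat m ^ nat (- k)"
    by (metis nat_0_le neg_0_le_iff_le not_le power_int_minus_divide power_int_of_nat
        less_imp_le minus_minus)
  thus ?thesis using Zinv_divide_power[OF Zinv_1] by simp
qed

lemma Gm_mult [simp]: "(k, r) \<otimes>\<^bsub>G\<^esub> (l, s) = (k + l, of_nat m powi k * s + r)"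
  by (simp add: Gm_def)

lemma Gm_one [simp]: "\<one>\<^bsub>G\<^esub> = (0, 0)"
  by (simp add: Gm_def)

lemma Gm_carrier [simp]: "(k, r) \<in> carrier G \<longleftrightarrow> r \<in> Z"
  by (simp add: Gm_def)

lemma group_Gm: "group G"
proof (rule groupI)
  fix x y assume "x \<in> carrier G" "y \<in> carrier G"
  thus "x \<otimes>\<^bsub>G\<^esub> y \<in> carrier G"
    by (cases x, cases y) auto
next
  fix x y z assume "x \<in> carrier G" "y \<in> carrier G" "z \<in> carrier G"
  thus "x \<otimes>\<^bsub>G\<^esub> y \<otimes>\<^bsub>G\<^esub> z = x \<otimes>\<^bsub>G\<^esub> (y \<otimes>\<^bsub>G\<^esub> z)"
    by (cases x, cases y, cases z) (auto simp: power_int_add algebra_simps)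
next
  fix x assume "x \<in> carrier G"
  then obtain k r where x: "x = (k, r)" "r \<in> Z" by (cases x) auto
  have "(- k, - (of_nat m powi (- k)) * r) \<otimes>\<^bsub>G\<^esub> x = \<one>\<^bsub>G\<^esub>"
    by (simp add: x)
  moreover have "(- k, - (of_nat m powi (- k)) * r) \<in> carrier G" using x by auto
  ultimately show "\<exists>y\<in>carrier G. y \<otimes>\<^bsub>G\<^esub> x = \<one>\<^bsub>G\<^esub>" by blast
qed (auto simp: Gm_def)

lemma Gm_inv [simp]:
  assumes "r \<in> Z"
  shows "inv\<^bsub>G\<^esub> (k, r) = (- k, - (of_nat m powi (- k)) * r)"
  by (rule group.inv_equality[OF group_Gm]) (use assms in auto)

lemma Gm_mult_inv:
  assumes "y \<in> Z"
  shows "(a, x) \<otimes>\<^bsub>G\<^esub> inv\<^bsub>G\<^esub> (b, y) = (a - b, x - of_nat m powi (a - b) * y)"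
proof -
  have "(of_nat m :: rat) powi a * of_nat m powi (- b) = of_nat m powi (a - b)"
    by (simp add: power_int_add[symmetric])
  thus ?thesis using assms by (simp add: algebra_simps)
qed

definition Zinv_dvd :: "nat \<Rightarrow> rat \<Rightarrow> bool" where
  "Zinv_dvd N x \<longleftrightarrow> (\<exists>y\<in>Z. x = of_nat N * y)"

lemma Zinv_dvd_0 [simp]: "Zinv_dvd N 0"
  unfolding Zinv_dvd_def by (rule bexI[of _ 0]) auto

lemma Zinv_dvd_add [intro]: "Zinv_dvd N x \<Longrightarrow> Zinv_dvd N y \<Longrightarrow> Zinv_dvd N (x + y)"
  unfolding Zinv_dvd_def by (auto simp: distrib_left intro!: bexI[of _ "_ + _"])

lemma Zinv_dvd_uminus_iff [simp]: "Zinv_dvd N (- x) \<longleftrightarrow> Zinv_dvd N x"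
  unfolding Zinv_dvd_def by (metis Zinv_uminus minus_minus mult_minus_right)

lemma Zinv_dvd_diff [intro]: "Zinv_dvd N x \<Longrightarrow> Zinv_dvd N y \<Longrightarrow> Zinv_dvd N (x - y)"
  using Zinv_dvd_add[of N x "- y"] by simp

lemma Zinv_dvd_mult [intro]: "z \<in> Z \<Longrightarrow> Zinv_dvd N x \<Longrightarrow> Zinv_dvd N (z * x)"
  unfolding Zinv_dvd_def by (auto intro!: bexI[of _ "z * _"])

lemma Zinv_dvd_imp_Zinv: "Zinv_dvd N x \<Longrightarrow> x \<in> Z"
  unfolding Zinv_dvd_def by auto

lemma Zinv_dvd_trans: "N' dvd N \<Longrightarrow> Zinv_dvd N x \<Longrightarrow> Zinv_dvd N' x"
proof -
  assume "N' dvd N" "Zinv_dvd N x"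
  then obtain c y where "N = N' * c" "y \<in> Z" "x = of_nat N * y"
    unfolding Zinv_dvd_def by blast
  thus ?thesis unfolding Zinv_dvd_def by (intro bexI[of _ "of_nat c * y"]) auto
qed

lemma pos_if_coprime: "coprime N m \<Longrightarrow> N > 0"
  using two_le_m by (cases "N = 0") auto

text \<open>Multiplying by a power of \<open>m\<close> clears the denominator, and \<open>m\<close> is invertible modulo \<open>N\<close>.\<close>
lemma Zinv_dvd_of_int_iff:
  assumes cop: "coprime N m"
  shows "Zinv_dvd N (of_int a) \<longleftrightarrow> int N dvd a"
proof
  assume "Zinv_dvd N (of_int a)"
  then obtain y where y: "y \<in> Z" "of_int a = of_nat N * y" unfolding Zinv_dvd_def by blast
  then obtain b j where "(of_int a :: rat) = of_nat N * (of_int b / of_nat m ^ j)"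
    unfolding Zinv_iff by blast
  hence "(of_int (a * int m ^ j) :: rat) = of_int (int N * b)"
    by (simp add: field_simps)
  hence "a * int m ^ j = int N * b" by linarith
  hence "int N dvd a * int m ^ j" by simp
  moreover have "coprime (int N) (int m ^ j)" using cop by simp
  ultimately show "int N dvd a" by (simp add: coprime_dvd_mult_left_iff)
next
  assume "int N dvd a"
  then obtain b where "a = int N * b" by blast
  thus "Zinv_dvd N (of_int a)" unfolding Zinv_dvd_def by (intro bexI[of _ "of_int b"]) auto
qed

text \<open>The residue of \<open>a / m\<^sup>j\<close> is \<open>a w mod N\<close> for an inverse \<open>w\<close> of \<open>m\<^sup>j\<close> modulo \<open>N\<close>.\<close>
lemma red_unique:
  assumes cop: "coprime N m" and x: "x \<in> Z"
  shows "\<exists>!c. 0 \<le> c \<and> c < int N \<and> (\<exists>y\<in>Z. x - of_int c = of_nat N * y)"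
proof -
  have N: "N > 0" using pos_if_coprime[OF cop] .
  obtain a j where xa: "x = of_int a / of_nat m ^ j" using x unfolding Zinv_iff by blast
  have "coprime (int m ^ j) (int N)" using cop by (simp add: coprime_commute)
  then obtain w where w: "[int m ^ j * w = 1] (mod int N)" using cong_solve_coprime_int by blast
  define c where "c = (a * w) mod int N"
  have c: "0 \<le> c" "c < int N" using N by (auto simp: c_def)
  have "[c * int m ^ j = a * w * int m ^ j] (mod int N)"
    unfolding Cong.cong_def by (simp only: c_def mod_mult_left_eq)
  also have "[a * w * int m ^ j = a * (int m ^ j * w)] (mod int N)" by (simp add: ac_simps)
  also have "[a * (int m ^ j * w) = a * 1] (mod int N)" by (rule cong_mult[OF cong_refl w])
  finally have "int N dvd a - c * int m ^ j" by (simp add: cong_iff_dvd_diff dvd_diff_commute)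
  then obtain t where t: "a - c * int m ^ j = int N * t" by blast
  have "x - of_int c = of_nat N * (of_int t / of_nat m ^ j)"
  proof -
    have "x - of_int c = (of_int (a - c * int m ^ j)) / of_nat m ^ j"
      unfolding xa by (simp add: field_simps)
    thus ?thesis unfolding t by simp
  qed
  moreover have "of_int t / of_nat m ^ j \<in> Z" by auto
  ultimately have ex: "0 \<le> c \<and> c < int N \<and> (\<exists>y\<in>Z. x - of_int c = of_nat N * y)"
    using c by blast
  have "c' = c" if c': "0 \<le> c'" "c' < int N" "Zinv_dvd N (x - of_int c')" for c'
  proof -
    have "Zinv_dvd N (x - of_int c)" using ex unfolding Zinv_dvd_def by blast
    hence "Zinv_dvd N ((x - of_int c) - (x - of_int c'))" using c'(3) by blast
    hence "Zinv_dvd N (of_int (c' - c))" by simp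
    hence "int N dvd c' - c" using Zinv_dvd_of_int_iff[OF cop] by blast
    thus "c' = c" using c c' by (intro cong_less_imp_eq_int) (simp_all add: cong_iff_dvd_diff)
  qed
  thus ?thesis using ex unfolding Zinv_dvd_def by blast
qed

lemma red_properties:
  assumes "coprime N m" "x \<in> Z"
  shows "0 \<le> red m N x" "red m N x < int N" "Zinv_dvd N (x - of_int (red m N x))"
proof -
  have "0 \<le> red m N x \<and> red m N x < int N \<and> (\<exists>y\<in>Z. x - of_int (red m N x) = of_nat N * y)"
    unfolding red_def by (rule theI'[OF red_unique[OF assms]])
  thus "0 \<le> red m N x" "red m N x < int N" "Zinv_dvd N (x - of_int (red m N x))"
    unfolding Zinv_dvd_def by auto
qed

lemma red_eq_iff:
  assumes cop: "coprime N m" and "x \<in> Z" "x' \<in> Z"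
  shows "red m N x = red m N x' \<longleftrightarrow> Zinv_dvd N (x - x')"
proof
  assume "red m N x = red m N x'"
  moreover have "Zinv_dvd N ((x - of_int (red m N x)) - (x' - of_int (red m N x')))"
    using red_properties(3)[OF cop \<open>x \<in> Z\<close>] red_properties(3)[OF cop \<open>x' \<in> Z\<close>]
    by (rule Zinv_dvd_diff)
  ultimately show "Zinv_dvd N (x - x')" by simp
next
  assume "Zinv_dvd N (x - x')"
  hence "Zinv_dvd N ((x - x') + (x' - of_int (red m N x')))"
    using red_properties(3)[OF cop \<open>x' \<in> Z\<close>] by (rule Zinv_dvd_add)
  hence "0 \<le> red m N x' \<and> red m N x' < int N \<and> (\<exists>y\<in>Z. x - of_int (red m N x') = of_nat N * y)"
    using red_properties(1,2)[OF cop \<open>x' \<in> Z\<close>] unfolding Zinv_dvd_def by simp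
  thus "red m N x = red m N x'"
    unfolding red_def[of m N x] by (rule the1_equality[OF red_unique[OF cop \<open>x \<in> Z\<close>]])
qed

lemma Zinv_dvd_power_int_sub_one_iff:
  assumes cop: "coprime N m"
  shows "Zinv_dvd N ((of_nat m :: rat) powi k - 1) \<longleftrightarrow> int (ord N m) dvd k"
proof -
  define n where "n = nat \<bar>k\<bar>"
  have nat_case: "Zinv_dvd N ((of_nat m :: rat) ^ n - 1) \<longleftrightarrow> ord N m dvd n"
    using Zinv_dvd_of_int_iff[OF cop, of "int m ^ n - 1"]
    by (simp add: ord_dvd_iff_dvd_power_sub_one)
  have "Zinv_dvd N ((of_nat m :: rat) powi k - 1) \<longleftrightarrow> Zinv_dvd N ((of_nat m :: rat) ^ n - 1)"
  proof (cases "k \<ge> 0")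
    case True
    thus ?thesis by (simp add: n_def power_int_of_nat[symmetric])
  next
    case False
    hence pk: "(of_nat m :: rat) powi k = 1 / of_nat m ^ n"
      by (simp add: n_def power_int_minus_divide[symmetric] power_int_of_nat[symmetric])
    have eq1: "(of_nat m :: rat) ^ n - 1 = - (of_nat (m ^ n) * ((of_nat m :: rat) powi k - 1))"
      and eq2: "(of_nat m :: rat) powi k - 1 = - (1 / of_nat m ^ n * ((of_nat m :: rat) ^ n - 1))"
      unfolding pk by (simp_all add: field_simps)
    show ?thesis
    proof
      assume "Zinv_dvd N ((of_nat m :: rat) powi k - 1)"
      thus "Zinv_dvd N ((of_nat m :: rat) ^ n - 1)"
        unfolding eq1 Zinv_dvd_uminus_iff by (rule Zinv_dvd_mult[OF Zinv_of_nat])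
    next
      assume "Zinv_dvd N ((of_nat m :: rat) ^ n - 1)"
      thus "Zinv_dvd N ((of_nat m :: rat) powi k - 1)"
        unfolding eq2 Zinv_dvd_uminus_iff by (rule Zinv_dvd_mult[OF Zinv_divide_power[OF Zinv_1]])
    qed
  qed
  also have "\<dots> \<longleftrightarrow> int (ord N m) dvd k"
    unfolding nat_case int_dvd_int_iff[symmetric] by (simp add: n_def)
  finally show ?thesis .
qed

text \<open>The kernel of \<open>(k, r) \<mapsto> (k mod L, r mod N)\<close>, which is a homomorphism onto an affine
  group over \<open>\<int>/N\<close> when \<open>ord\<^sub>N(m)\<close> divides \<open>L\<close>; for \<open>L = ord\<^sub>N(m)\<close> it is \<open>G\<^sub>m(N)\<close>.\<close>
definition level_subgroup :: "nat \<Rightarrow> nat \<Rightarrow> (int \<times> rat) set" where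
  "level_subgroup N L = {(j, r). r \<in> Z \<and> int L dvd j \<and> Zinv_dvd N r}"

lemma level_subgroup_iff [simp]:
  "(j, r) \<in> level_subgroup N L \<longleftrightarrow> r \<in> Z \<and> int L dvd j \<and> Zinv_dvd N r"
  by (simp add: level_subgroup_def)

lemma level_subgroup_subset: "level_subgroup N L \<subseteq> carrier G"
  by (auto simp: level_subgroup_def)

lemma Gm_cong_eq_level_subgroup:
  assumes cop: "coprime N m"
  shows "Gm_cong m N = level_subgroup N (ord N m)"
proof -
  have "(k, r) \<in> Gm_cong m N \<longleftrightarrow> (k, r) \<in> level_subgroup N (ord N m)" for k r
  proof (cases "r \<in> Z")
    case True
    thus ?thesis
      using red_eq_iff[OF cop Zinv_power_int Zinv_1, of k] red_eq_iff[OF cop True Zinv_0]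
        Zinv_dvd_power_int_sub_one_iff[OF cop, of k]
      by (simp add: Gm_cong_def)
  qed (simp add: Gm_cong_def)
  thus ?thesis by auto
qed

lemma level_subgroup_antimono:
  assumes "N' dvd N" "L' dvd L"
  shows "level_subgroup N L \<subseteq> level_subgroup N' L'"
proof clarify
  fix j r assume "(j, r) \<in> level_subgroup N L"
  moreover have "int L' dvd int L" using assms(2) by simp
  ultimately show "(j, r) \<in> level_subgroup N' L'"
    using Zinv_dvd_trans[OF assms(1)] dvd_trans by auto
qed

lemma subgroup_level_subgroup:
  assumes cop: "coprime N m" and oL: "ord N m dvd L"
  shows "subgroup (level_subgroup N L) G"
proof (rule group.subgroupI[OF group_Gm level_subgroup_subset])
  have "(0, 0) \<in> level_subgroup N L" by simp
  thus "level_subgroup N L \<noteq> {}" by blast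
next
  fix h assume hL: "h \<in> level_subgroup N L"
  obtain j r where jr: "h = (j, r)" by (cases h)
  have h: "h = (j, r)" "r \<in> Z" "int L dvd j" "Zinv_dvd N r" using hL jr by auto
  have "Zinv_dvd N (- (of_nat m powi (- j)) * r)"
    by (rule Zinv_dvd_mult[OF Zinv_uminus[OF Zinv_power_int] h(4)])
  thus "inv\<^bsub>G\<^esub> h \<in> level_subgroup N L" using h Zinv_dvd_imp_Zinv by auto
next
  fix h h' assume hL: "h \<in> level_subgroup N L" "h' \<in> level_subgroup N L"
  obtain j r l s where jr: "h = (j, r)" "h' = (l, s)" by (cases h, cases h')
  have hh': "h = (j, r)" "h' = (l, s)" "r \<in> Z" "int L dvd j" "Zinv_dvd N r"
    "s \<in> Z" "int L dvd l" "Zinv_dvd N s" using hL jr by auto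
  have "Zinv_dvd N (of_nat m powi j * s + r)"
    by (rule Zinv_dvd_add[OF Zinv_dvd_mult[OF Zinv_power_int hh'(8)] hh'(5)])
  thus "h \<otimes>\<^bsub>G\<^esub> h' \<in> level_subgroup N L" using hh' Zinv_dvd_imp_Zinv by auto
qed

text \<open>Conjugating \<open>(j, r)\<close> by \<open>(a, b)\<close> gives \<open>(j, m\<^sup>a r - b (m\<^sup>j - 1))\<close>, and
  \<open>m\<^sup>j \<equiv> 1\<close> modulo \<open>N\<close> because \<open>ord N m\<close> divides \<open>L\<close>.\<close>
lemma normal_level_subgroup:
  assumes cop: "coprime N m" and oL: "ord N m dvd L"
  shows "level_subgroup N L \<lhd> G"
proof (rule group.normal_invI[OF group_Gm subgroup_level_subgroup[OF assms]])
  fix x h assume xhG: "x \<in> carrier G" "h \<in> level_subgroup N L"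
  obtain a b j r where ab: "x = (a, b)" "h = (j, r)" by (cases x, cases h)
  have xh: "x = (a, b)" "h = (j, r)" "b \<in> Z" "r \<in> Z" "int L dvd j" "Zinv_dvd N r"
    using xhG ab by auto
  have "(of_nat m :: rat) powi (a + j) * of_nat m powi (- a) = of_nat m powi j"
    and "(of_nat m :: rat) powi (- a) * of_nat m powi (a + j) = of_nat m powi j"
    by (simp_all add: power_int_add[symmetric])
  hence conj: "x \<otimes>\<^bsub>G\<^esub> h \<otimes>\<^bsub>G\<^esub> inv\<^bsub>G\<^esub> x = (j, of_nat m powi a * r - b * (of_nat m powi j - 1))"
    using xh by (simp add: algebra_simps)
  have "int (ord N m) dvd j" using oL xh(5) by (meson dvd_trans int_dvd_int_iff)
  hence "Zinv_dvd N (of_nat m powi a * r - b * (of_nat m powi j - 1))"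
    using xh Zinv_dvd_power_int_sub_one_iff[OF cop] by blast
  thus "x \<otimes>\<^bsub>G\<^esub> h \<otimes>\<^bsub>G\<^esub> inv\<^bsub>G\<^esub> x \<in> level_subgroup N L"
    unfolding conj using xh Zinv_dvd_imp_Zinv by simp
qed

definition word_prod :: "(int \<times> rat) list \<Rightarrow> int \<times> rat" where
  "word_prod ws = foldr (\<otimes>\<^bsub>G\<^esub>) ws \<one>\<^bsub>G\<^esub>"

abbreviation gens :: "(int \<times> rat) set" where
  "gens \<equiv> {genA, genT} \<union> m_inv G ` {genA, genT}"

lemma gens_eq: "gens = {(0, 1), (1, 0), (0, -1), (-1, 0)}"
  by (auto simp: genA_def genT_def)

lemma gens_subset_carrier: "gens \<subseteq> carrier G"
  unfolding gens_eq by auto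

lemma le_m_power: "n \<le> m ^ n"
  using less_exp[of n] power_mono[OF two_le_m, of n] by linarith

lemma word_prod_Nil [simp]: "word_prod [] = (0, 0)"
  by (simp add: word_prod_def)

lemma word_prod_Cons [simp]: "word_prod (x # ws) = x \<otimes>\<^bsub>G\<^esub> word_prod ws"
  by (simp add: word_prod_def)

lemma word_prod_carrier: "set ws \<subseteq> carrier G \<Longrightarrow> word_prod ws \<in> carrier G"
  by (induction ws) (simp_all add: monoid.m_closed[OF group.is_monoid[OF group_Gm]])

lemma word_prod_append:
  assumes "set ws \<subseteq> carrier G" "set vs \<subseteq> carrier G"
  shows "word_prod (ws @ vs) = word_prod ws \<otimes>\<^bsub>G\<^esub> word_prod vs"
  using assms
proof (induction ws)
  case Nil
  thus ?case using word_prod_carrier[OF Nil(2)] monoid.l_one[OF group.is_monoid[OF group_Gm]] by simp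
next
  case (Cons x ws)
  thus ?case using word_prod_carrier[of ws] word_prod_carrier[OF Cons(3)]
    by (simp add: group.is_monoid[OF group_Gm] monoid.m_assoc)
qed

lemma word_prod_replicate_genA: "word_prod (replicate n genA) = (0, of_nat n)"
  by (induction n) (auto simp: genA_def)

lemma word_prod_replicate_shift: "word_prod (replicate n (k, 0)) = (int n * k, 0)"
  by (induction n) (auto simp: algebra_simps)

fun base_word :: "nat \<Rightarrow> nat \<Rightarrow> (int \<times> rat) list" where
  "base_word 0 i = []"
| "base_word (Suc n) i = replicate (i mod m) genA @ genT # base_word n (i div m)"

lemma set_base_word: "set (base_word n i) \<subseteq> {genA, genT}"
  by (induction n arbitrary: i) auto

lemma length_base_word: "length (base_word n i) \<le> m * n"
proof (induction n arbitrary: i)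
  case (Suc n)
  have "i mod m < m" using two_le_m by simp
  thus ?case using Suc[of "i div m"] by simp
qed simp

lemma word_prod_base_word: "word_prod (base_word n i) = (int n, of_nat (i mod m ^ n))"
proof (induction n arbitrary: i)
  case (Suc n)
  have "set (replicate (i mod m) genA) \<subseteq> carrier G" "set (genT # base_word n (i div m)) \<subseteq> carrier G"
    using set_base_word[of n "i div m"] by (auto simp: genA_def genT_def)
  hence "word_prod (base_word (Suc n) i)
      = (0, of_nat (i mod m)) \<otimes>\<^bsub>G\<^esub> ((1, 0) \<otimes>\<^bsub>G\<^esub> (int n, of_nat (i div m mod m ^ n)))"
    by (simp add: word_prod_append word_prod_replicate_genA Suc genT_def)
  also have "\<dots> = (int (Suc n), of_nat m * of_nat (i div m mod m ^ n) + of_nat (i mod m))"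
    by simp
  also have "(of_nat m * of_nat (i div m mod m ^ n) + of_nat (i mod m) :: rat) = of_nat (i mod m ^ Suc n)"
    by (metis mod_mult2_eq of_nat_add of_nat_mult power_Suc)
  finally show ?case .
qed simp

text \<open>The base-\<open>m\<close> digit word reaches \<open>(n, i)\<close>, and \<open>T\<^bsup>-n\<^esup> T\<^sup>j\<close> then corrects the first
  coordinate without touching the second.\<close>
definition coset_word :: "nat \<Rightarrow> nat \<Rightarrow> nat \<Rightarrow> (int \<times> rat) list" where
  "coset_word n j i = base_word n i @ replicate n (-1, 0) @ replicate j genT"

lemma set_coset_word: "set (coset_word n j i) \<subseteq> gens"
  using set_base_word[of n i] unfolding gens_eq by (auto simp: coset_word_def genA_def genT_def)

lemma length_coset_word: "length (coset_word n j i) \<le> j + (m + 1) * n"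
  using length_base_word[of n i] by (simp add: coset_word_def)

lemma word_prod_coset_word:
  assumes "i < m ^ n"
  shows "word_prod (coset_word n j i) = (int j, of_nat i)"
proof -
  have sets: "set (base_word n i) \<subseteq> carrier G" "set (replicate n ((-1, 0) :: int \<times> rat)) \<subseteq> carrier G"
    "set (replicate j genT) \<subseteq> carrier G"
    using set_base_word[of n i] by (auto simp: genA_def genT_def)
  have "word_prod (coset_word n j i)
      = word_prod (base_word n i) \<otimes>\<^bsub>G\<^esub> (word_prod (replicate n (-1, 0)) \<otimes>\<^bsub>G\<^esub> word_prod (replicate j genT))"
    unfolding coset_word_def using sets by (simp add: word_prod_append)
  also have "\<dots> = (int j, of_nat i)"
    using assms by (simp add: word_prod_base_word word_prod_replicate_shift genT_def)
  finally show ?thesis .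
qed

lemma abs_fst_word_prod_le:
  assumes "set ws \<subseteq> gens"
  shows "\<bar>fst (word_prod ws)\<bar> \<le> int (length ws)"
  using assms
proof (induction ws)
  case (Cons x ws)
  obtain a b where ab: "word_prod ws = (a, b)" by (cases "word_prod ws")
  have "\<bar>a\<bar> \<le> int (length ws)" using Cons ab by simp
  moreover have "x \<in> {(0, 1), (1, 0), (0, -1), (-1, 0)}" using Cons.prems unfolding gens_eq by auto
  ultimately show ?case using ab by auto
qed simp

end

section \<open>Quotients by level subgroups\<close>

locale Gm_quotient = BS1m +
  fixes N L :: nat
  assumes coprime_N: "coprime N m" and L_pos: "0 < L" and ord_dvd_L: "ord N m dvd L"
begin

abbreviation "H \<equiv> level_subgroup N L"

lemma subgroup_H: "subgroup H G"
  by (rule subgroup_level_subgroup[OF coprime_N ord_dvd_L])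

lemma rcoset_eq_iff:
  assumes "x \<in> carrier G" "y \<in> carrier G"
  shows "H #>\<^bsub>G\<^esub> x = H #>\<^bsub>G\<^esub> y \<longleftrightarrow> x \<otimes>\<^bsub>G\<^esub> inv\<^bsub>G\<^esub> y \<in> H"
proof
  assume "H #>\<^bsub>G\<^esub> x = H #>\<^bsub>G\<^esub> y"
  hence "x \<in> H #>\<^bsub>G\<^esub> y" using group.rcos_self[OF group_Gm assms(1) subgroup_H] by simp
  thus "x \<otimes>\<^bsub>G\<^esub> inv\<^bsub>G\<^esub> y \<in> H"
    using subgroup.rcos_module_imp[OF subgroup_H group_Gm assms(2)] by blast
next
  assume "x \<otimes>\<^bsub>G\<^esub> inv\<^bsub>G\<^esub> y \<in> H"
  hence "x \<in> H #>\<^bsub>G\<^esub> y" using subgroup.rcos_module_rev[OF subgroup_H group_Gm assms(2,1)] by blast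
  thus "H #>\<^bsub>G\<^esub> x = H #>\<^bsub>G\<^esub> y"
    using group.repr_independence[OF group_Gm _ assms(2) subgroup_H] by metis
qed

lemma exists_coset_rep:
  assumes "g \<in> carrier G"
  shows "\<exists>j i. j < L \<and> i < N \<and> (int j, of_nat i) \<otimes>\<^bsub>G\<^esub> inv\<^bsub>G\<^esub> g \<in> H"
proof -
  obtain k r where kr: "g = (k, r)" by (cases g)
  have r: "r \<in> Z" using assms kr by simp
  define j where "j = nat (k mod int L)"
  define i where "i = nat (red m N r)"
  have "0 \<le> k mod int L" "k mod int L < int L" using L_pos by simp_all
  hence jL: "j < L" and j: "int j = k mod int L" unfolding j_def by linarith+
  have iN: "i < N" and i: "of_nat i = (of_int (red m N r) :: rat)"
    using red_properties(1,2)[OF coprime_N r] unfolding i_def by auto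
  have dv: "int L dvd int j - k" unfolding j using mod_eq_dvd_iff[of "k mod int L" "int L" k] by simp
  hence pw: "Zinv_dvd N (of_nat m powi (int j - k) - 1)"
    using Zinv_dvd_power_int_sub_one_iff[OF coprime_N] ord_dvd_L
    by (meson dvd_trans int_dvd_int_iff)
  have "Zinv_dvd N (of_nat i - r)"
    using red_properties(3)[OF coprime_N r] Zinv_dvd_uminus_iff[of N "r - of_nat i"] by (simp add: i)
  hence "Zinv_dvd N ((of_nat i - r) - r * (of_nat m powi (int j - k) - 1))"
    by (rule Zinv_dvd_diff[OF _ Zinv_dvd_mult[OF r pw]])
  moreover have "(int j, of_nat i) \<otimes>\<^bsub>G\<^esub> inv\<^bsub>G\<^esub> g
      = (int j - k, (of_nat i - r) - r * (of_nat m powi (int j - k) - 1))"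
    unfolding kr Gm_mult_inv[OF r] by (simp add: algebra_simps)
  ultimately have "(int j, of_nat i) \<otimes>\<^bsub>G\<^esub> inv\<^bsub>G\<^esub> g \<in> H"
    using dv Zinv_dvd_imp_Zinv by simp
  thus ?thesis using jL iN by blast
qed

lemma RCOSETS_eq: "RCOSETS G H = (\<lambda>(j, i). H #>\<^bsub>G\<^esub> (int j, of_nat i)) ` ({..<L} \<times> {..<N})"
proof safe
  fix c assume "c \<in> RCOSETS G H"
  then obtain g where g: "g \<in> carrier G" "c = H #>\<^bsub>G\<^esub> g" unfolding RCOSETS_def by blast
  obtain j i where ji: "j < L" "i < N" "(int j, of_nat i) \<otimes>\<^bsub>G\<^esub> inv\<^bsub>G\<^esub> g \<in> H"
    using exists_coset_rep[OF g(1)] by blast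
  have "H #>\<^bsub>G\<^esub> (int j, of_nat i) = c" using rcoset_eq_iff[OF _ g(1)] ji g(2) by simp
  thus "c \<in> (\<lambda>(j, i). H #>\<^bsub>G\<^esub> (int j, of_nat i)) ` ({..<L} \<times> {..<N})"
    using ji by force
qed (use group.rcosetsI[OF group_Gm level_subgroup_subset] in simp)

lemma inj_on_coset_reps: "inj_on (\<lambda>(j, i). H #>\<^bsub>G\<^esub> (int j, of_nat i)) ({..<L} \<times> {..<N})"
proof (rule inj_onI, clarify)
  fix j i j' i' assume ji: "j < L" "i < N" "j' < L" "i' < N"
    and "H #>\<^bsub>G\<^esub> (int j, of_nat i) = H #>\<^bsub>G\<^esub> (int j', of_nat i')"
  hence "(int j, of_nat i) \<otimes>\<^bsub>G\<^esub> inv\<^bsub>G\<^esub> (int j', of_nat i') \<in> H"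
    using rcoset_eq_iff by simp
  hence h: "int L dvd int j - int j'"
    "Zinv_dvd N (of_nat i - of_nat m powi (int j - int j') * of_nat i')"
    by (simp_all only: Gm_mult_inv[OF Zinv_of_nat] level_subgroup_iff)
  have "j = j'" using h(1) ji by (intro cong_less_imp_eq_int[of "int j" L "int j'", simplified])
      (simp_all add: cong_iff_dvd_diff)
  hence "Zinv_dvd N (of_int (int i - int i'))" using h(2) by simp
  hence "int N dvd int i - int i'" using Zinv_dvd_of_int_iff[OF coprime_N] by blast
  hence "i = i'" using ji by (intro cong_less_imp_eq_int[of "int i" N "int i'", simplified])
      (simp_all add: cong_iff_dvd_diff)
  thus "j = j' \<and> i = i'" using \<open>j = j'\<close> by simp
qed

lemma card_RCOSETS: "card (RCOSETS G H) = L * N"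
  unfolding RCOSETS_eq using card_image[OF inj_on_coset_reps] by simp

lemma finite_RCOSETS: "finite (RCOSETS G H)"
  unfolding RCOSETS_eq by simp

lemma H_in_RCOSETS: "H \<in> RCOSETS G H"
  using group.rcosetsI[OF group_Gm level_subgroup_subset, of "\<one>\<^bsub>G\<^esub>"]
    group.coset_mult_one[OF group_Gm level_subgroup_subset] by simp

lemma exists_short_word:
  assumes c: "c \<in> RCOSETS G H" and d: "d \<in> RCOSETS G H" and n: "N \<le> m ^ n"
  shows "\<exists>ws. length ws \<le> L + (m + 1) * n \<and> set ws \<subseteq> gens \<and> c #>\<^bsub>G\<^esub> word_prod ws = d"
proof -
  interpret grp: group G by (rule group_Gm)
  obtain x y where xy: "x \<in> carrier G" "c = H #>\<^bsub>G\<^esub> x" "y \<in> carrier G" "d = H #>\<^bsub>G\<^esub> y"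
    using c d unfolding RCOSETS_def by blast
  define g where "g = inv\<^bsub>G\<^esub> x \<otimes>\<^bsub>G\<^esub> y"
  obtain j i where ji: "j < L" "i < N" "(int j, of_nat i) \<otimes>\<^bsub>G\<^esub> inv\<^bsub>G\<^esub> g \<in> H"
    using exists_coset_rep[of g] xy unfolding g_def by auto
  define ws where "ws = coset_word n j i"
  have w: "word_prod ws = (int j, of_nat i)"
    unfolding ws_def using ji n by (intro word_prod_coset_word) simp
  have wc: "word_prod ws \<in> carrier G" unfolding w by simp
  have "x \<otimes>\<^bsub>G\<^esub> (word_prod ws \<otimes>\<^bsub>G\<^esub> inv\<^bsub>G\<^esub> g) \<otimes>\<^bsub>G\<^esub> inv\<^bsub>G\<^esub> x \<in> H"
    using normal.inv_op_closed2[OF normal_level_subgroup[OF coprime_N ord_dvd_L] xy(1)] ji(3) w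
    by simp
  also have "x \<otimes>\<^bsub>G\<^esub> (word_prod ws \<otimes>\<^bsub>G\<^esub> inv\<^bsub>G\<^esub> g) \<otimes>\<^bsub>G\<^esub> inv\<^bsub>G\<^esub> x
      = (x \<otimes>\<^bsub>G\<^esub> word_prod ws) \<otimes>\<^bsub>G\<^esub> inv\<^bsub>G\<^esub> y"
    using xy wc unfolding g_def by (simp add: grp.inv_mult_group grp.m_assoc)
  finally have "H #>\<^bsub>G\<^esub> (x \<otimes>\<^bsub>G\<^esub> word_prod ws) = H #>\<^bsub>G\<^esub> y"
    using rcoset_eq_iff xy wc by simp
  hence "c #>\<^bsub>G\<^esub> word_prod ws = d"
    using xy wc grp.coset_mult_assoc[OF level_subgroup_subset xy(1) wc] by simp
  moreover have "length ws \<le> L + (m + 1) * n"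
    using length_coset_word[of n j i] ji unfolding ws_def by simp
  ultimately show ?thesis using set_coset_word unfolding ws_def by blast
qed

lemma cay_diam_le:
  assumes "N \<le> m ^ n"
  shows "cay_diam G {genA, genT} H \<le> L + (m + 1) * n"
proof (rule cay_diam_le[OF finite_RCOSETS H_in_RCOSETS])
  fix c d assume "c \<in> RCOSETS G H" "d \<in> RCOSETS G H"
  then obtain ws where ws: "length ws \<le> L + (m + 1) * n" "set ws \<subseteq> gens"
    "c #>\<^bsub>G\<^esub> word_prod ws = d"
    using exists_short_word assms by blast
  have "cay_dist G {genA, genT} H c d \<le> length ws"
    by (rule cay_dist_le_length[OF ws(2) ws(3)[unfolded word_prod_def]])
  thus "cay_dist G {genA, genT} H c d \<le> L + (m + 1) * n" using ws(1) by linarith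
qed

text \<open>Every generator changes the \<open>T\<close>-exponent by at most one, and reaching the coset of
  \<open>T\<^bsup>L div 2\<^esup>\<close> from \<open>H\<close> needs a \<open>T\<close>-exponent congruent to \<open>L div 2\<close> modulo \<open>L\<close>.\<close>
lemma cay_diam_ge: "L div 2 \<le> cay_diam G {genA, genT} H"
proof -
  define d where "d = H #>\<^bsub>G\<^esub> (int (L div 2), 0)"
  have d: "d \<in> RCOSETS G H" unfolding d_def using group.rcosetsI[OF group_Gm level_subgroup_subset] by simp
  have "L div 2 \<le> length ws"
    if ws: "set ws \<subseteq> gens" "H #>\<^bsub>G\<^esub> foldr (\<otimes>\<^bsub>G\<^esub>) ws \<one>\<^bsub>G\<^esub> = d" for ws
  proof -
    obtain a b where ab: "word_prod ws = (a, b)" by (cases "word_prod ws")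
    have wc: "word_prod ws \<in> carrier G" using word_prod_carrier gens_subset_carrier ws(1) by blast
    moreover have "H #>\<^bsub>G\<^esub> word_prod ws = H #>\<^bsub>G\<^esub> (int (L div 2), 0)"
      using ws(2) unfolding d_def word_prod_def .
    ultimately have "word_prod ws \<otimes>\<^bsub>G\<^esub> inv\<^bsub>G\<^esub> (int (L div 2), 0) \<in> H"
      using rcoset_eq_iff[OF wc, of "(int (L div 2), 0)"] by simp
    hence "int L dvd a - int (L div 2)" using ab by simp
    hence "int (L div 2) \<le> \<bar>a\<bar>" by (rule half_modulus_le_abs)
    thus ?thesis using abs_fst_word_prod_le[OF ws(1)] ab by simp
  qed
  moreover obtain ws where "set ws \<subseteq> gens" "H #>\<^bsub>G\<^esub> word_prod ws = d"
    using exists_short_word[OF H_in_RCOSETS d le_m_power] by blast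
  ultimately have "L div 2 \<le> cay_dist G {genA, genT} H H d"
    unfolding word_prod_def by (rule cay_dist_ge[rotated 2])
  also have "\<dots> \<le> cay_diam G {genA, genT} H"
    by (rule cay_dist_le_cay_diam[OF finite_RCOSETS H_in_RCOSETS d])
  finally show ?thesis .
qed

end

section \<open>Arithmetic box spaces\<close>

lemma arith_seq_ge:
  assumes "arith_seq m N" "k \<ge> 1"
  shows "k < N k"
  using assms(2)
proof (induction k rule: dec_induct)
  case base thus ?case using assms(1) unfolding arith_seq_def by auto
next
  case (step k) thus ?case using assms(1) unfolding arith_seq_def by (metis Suc_le_eq le_less_trans)
qed

context BS1m
begin

lemma Gm_quotient_ord: "coprime N m \<Longrightarrow> Gm_quotient m N (ord N m)"
  using two_le_m by unfold_locales (simp_all add: ord_eq_0)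

lemma card_RCOSETS_Gm_cong:
  "coprime N m \<Longrightarrow> card (RCOSETS G (Gm_cong m N)) = ord N m * N"
  using Gm_quotient.card_RCOSETS[OF Gm_quotient_ord] by (simp add: Gm_cong_eq_level_subgroup)

lemma cay_diam_Gm_cong_ge:
  "coprime N m \<Longrightarrow> ord N m div 2 \<le> cay_diam G {genA, genT} (Gm_cong m N)"
  using Gm_quotient.cay_diam_ge[OF Gm_quotient_ord] by (simp add: Gm_cong_eq_level_subgroup)

text \<open>Using \<open>n = \<lceil>log\<^sub>2 N\<rceil>\<close> base-\<open>m\<close> digits in the coset words.\<close>
lemma cay_diam_Gm_cong_le:
  assumes cop: "coprime N m"
  shows "real (cay_diam G {genA, genT} (Gm_cong m N))
    \<le> real (ord N m) + real (m + 1) / ln 2 * (ln (real N) + 1)"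
proof -
  define n where "n = nat \<lceil>log 2 (real N)\<rceil>"
  have N: "real N \<ge> 1" using pos_if_coprime[OF cop] by simp
  have "real N = 2 powr (log 2 (real N))" using N by simp
  also have "\<dots> \<le> 2 powr (real n)" unfolding n_def by (intro powr_mono real_nat_ceiling_ge) auto
  also have "\<dots> = real (2 ^ n)" by (simp add: powr_realpow)
  finally have "N \<le> 2 ^ n" by linarith
  also have "\<dots> \<le> m ^ n" using two_le_m by (simp add: power_mono)
  finally have "cay_diam G {genA, genT} (Gm_cong m N) \<le> ord N m + (m + 1) * n"
    using Gm_quotient.cay_diam_le[OF Gm_quotient_ord[OF cop]]
    by (simp add: Gm_cong_eq_level_subgroup[OF cop])
  hence "real (cay_diam G {genA, genT} (Gm_cong m N)) \<le> real (ord N m + (m + 1) * n)"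
    by (simp only: of_nat_le_iff)
  also have "\<dots> = real (ord N m) + real (m + 1) * real n" by (simp add: algebra_simps)
  also have "real n \<le> ln (real N) / ln 2 + 1"
    using N ceiling_correct[of "log 2 (real N)"] by (simp add: n_def log_def)
  also have "ln (real N) / ln 2 + 1 \<le> (ln (real N) + 1) / ln 2"
    using ln_2_less_1 by (simp add: add_divide_distrib)
  finally show ?thesis by (simp add: mult_left_mono)
qed

lemma card_RCOSETS_arith_box_unbounded:
  assumes "arith_seq m N"
  shows "\<exists>k\<ge>1. B < real (card (RCOSETS G (Gm_cong m (N k))))"
proof -
  define k where "k = nat \<lceil>B\<rceil> + 1"
  have k: "k \<ge> 1" "B < real k" unfolding k_def by linarith+
  have cop: "coprime (N k) m" using assms k(1) unfolding arith_seq_def by simp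
  have "real k < real (N k)" using arith_seq_ge[OF assms k(1)] by simp
  also have "N k \<le> ord (N k) m * N k"
    using mult_le_mono1[OF one_le_ord[OF cop], of "N k"] by simp
  hence "real (N k) \<le> real (card (RCOSETS G (Gm_cong m (N k))))"
    unfolding card_RCOSETS_Gm_cong[OF cop] by linarith
  finally show ?thesis using k by force
qed

lemma cay_diam_Gm_cong_le_card:
  assumes cop: "coprime N m"
  defines "X \<equiv> real (card (RCOSETS G (Gm_cong m N)))"
  shows "real (cay_diam G {genA, genT} (Gm_cong m N)) \<le> X powr (1/2) + real (m + 1) / ln 2 * (ln X + 1)"
proof -
  have N: "1 \<le> real N" using pos_if_coprime[OF cop] by simp
  have "1 \<le> ord N m" by (rule one_le_ord[OF cop])
  hence o: "1 \<le> real (ord N m)" "real (ord N m) \<le> real N"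
    using ord_le_modulus[OF cop pos_if_coprime[OF cop]] by simp_all
  have X: "X = real (ord N m) * real N" unfolding X_def card_RCOSETS_Gm_cong[OF cop] by simp
  have "(real (ord N m))^2 \<le> X" unfolding X power2_eq_square using o by (intro mult_left_mono) auto
  hence "real (ord N m) \<le> sqrt X" by (rule real_le_rsqrt)
  hence ord_le: "real (ord N m) \<le> X powr (1/2)" unfolding X by (simp add: powr_half_sqrt)
  have "real N \<le> X" unfolding X using o N mult_right_mono[of 1 "real (ord N m)" "real N"] by simp
  hence "ln (real N) \<le> ln X" using N by (subst ln_le_cancel_iff) auto
  hence "real (m + 1) / ln 2 * (ln (real N) + 1) \<le> real (m + 1) / ln 2 * (ln X + 1)"
    by (intro mult_left_mono) auto
  thus ?thesis using cay_diam_Gm_cong_le[OF cop] ord_le by linarith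
qed

theorem arith_box_property_D_le_half:
  assumes N: "arith_seq m N" and D: "property_D G {genA, genT} (arith_box m N) \<alpha>"
  shows "\<alpha> \<le> 1/2"
proof (rule ccontr)
  assume "\<not> \<alpha> \<le> 1/2"
  moreover have "0 \<le> real (m + 1) / ln 2" by simp
  ultimately have "(\<lambda>x. x powr (1/2) + real (m + 1) / ln 2 * (ln x + 1)) \<in> o(\<lambda>x. x powr \<alpha>)"
    by real_asymp
  moreover have "coprime (N k) m" if "k \<ge> 1" for k using N that unfolding arith_seq_def by simp
  ultimately show False
    using not_property_D_if_diam_smallo[OF _ card_RCOSETS_arith_box_unbounded[OF N]]
      cay_diam_Gm_cong_le_card D by blast
qed

lemma arith_seq_power_square_sub_one: "arith_seq m (\<lambda>k. (m^2 - 1) ^ k)"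
  unfolding arith_seq_def
proof (intro allI impI conjI)
  fix k :: nat assume k: "k \<ge> 1"
  have q: "3 \<le> m^2 - 1"
    using mult_le_mono[OF two_le_m two_le_m] by (simp add: power2_eq_square)
  moreover have "m^2 - 1 \<le> (m^2 - 1) ^ k" using k q by (simp add: self_le_power)
  ultimately show "2 \<le> (m^2 - 1) ^ k" by linarith
  show "(m^2 - 1) ^ k < (m^2 - 1) ^ Suc k" using q by (intro power_strict_increasing) auto
  show "(m^2 - 1) ^ k dvd (m^2 - 1) ^ Suc k" by (simp add: le_imp_power_dvd)
  have "coprime (m^2 - 1) m" using coprime_square_sub_one two_le_m by simp
  thus "coprime ((m^2 - 1) ^ k) m" by simp
qed

text \<open>With \<open>q = m\<^sup>2 - 1\<close> the index is \<open>2 q\<^bsup>k-1\<^esup> \<cdot> q\<^sup>k = 2q (q\<^bsup>k-1\<^esup>)\<^sup>2\<close>, and the diameter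
  is at least \<open>q\<^bsup>k-1\<^esup>\<close>.\<close>
theorem power_square_sub_one_property_D_half:
  "property_D G {genA, genT} (arith_box m (\<lambda>k. (m^2 - 1) ^ k)) (1/2)"
  unfolding property_D_def
proof (intro exI[of _ "1 / sqrt (2 * real (m^2 - 1))"] conjI allI impI)
  define q where "q = m^2 - 1"
  have q: "3 \<le> q" using mult_le_mono[OF two_le_m two_le_m] by (simp add: q_def power2_eq_square)
  show "0 < 1 / sqrt (2 * real (m^2 - 1))" unfolding q_def[symmetric] using q by simp
  fix k :: nat assume k: "k \<ge> 1"
  have cop: "coprime (q ^ k) m" using coprime_square_sub_one two_le_m by (simp add: q_def)
  have o: "ord (q ^ k) m = 2 * q ^ (k - 1)"
    using ord_power_square_sub_one[OF two_le_m k] by (simp add: q_def)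
  define X where "X = real q ^ (k - 1)"
  have qk: "q ^ k = q * q ^ (k - 1)" using k by (cases k) auto
  have "real (card (RCOSETS G (Gm_cong m (q ^ k)))) = real (2 * q ^ (k - 1) * q ^ k)"
    by (simp only: card_RCOSETS_Gm_cong[OF cop] o)
  also have "\<dots> = (sqrt (2 * real q) * X)^2"
    unfolding qk by (simp add: X_def power2_eq_square power_mult_distrib)
  finally have "1 / sqrt (2 * real q) * real (card (RCOSETS G (Gm_cong m (q ^ k)))) powr (1/2) = X"
    using q by (simp add: powr_half_sqrt X_def)
  also have "X \<le> real (cay_diam G {genA, genT} (Gm_cong m (q ^ k)))"
    using cay_diam_Gm_cong_ge[OF cop] unfolding o X_def by simp
  finally show "1 / sqrt (2 * real (m^2 - 1)) * real (card (RCOSETS G (Gm_cong m ((m^2 - 1) ^ k)))) powr (1/2)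
      \<le> real (cay_diam G {genA, genT} (Gm_cong m ((m^2 - 1) ^ k)))"
    by (simp add: q_def)
qed

lemma arith_seq_double_exp: "arith_seq m (\<lambda>k. m ^ 2 ^ k - 1)"
  unfolding arith_seq_def
proof (intro allI impI conjI)
  fix k :: nat assume k: "k \<ge> 1"
  have "(2::nat) \<le> 2 ^ k" using k by (simp add: self_le_power)
  hence "(2::nat) ^ 2 \<le> 2 ^ 2 ^ k" by (rule power_increasing) simp
  also have "\<dots> \<le> m ^ 2 ^ k" using two_le_m by (simp add: power_mono)
  finally have m4: "4 \<le> m ^ 2 ^ k" by simp
  thus "2 \<le> m ^ 2 ^ k - 1" by simp
  show "coprime (m ^ 2 ^ k - 1) m"
    using coprime_diff_one_left_nat[of "m ^ 2 ^ k"] two_le_m by simp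
  have "m ^ 2 ^ k < m ^ 2 ^ Suc k" using two_le_m by (intro power_strict_increasing) auto
  thus "m ^ 2 ^ k - 1 < m ^ 2 ^ Suc k - 1" using m4 by simp
  have "m ^ 2 ^ Suc k - 1 = (m ^ 2 ^ k - 1) * (m ^ 2 ^ k + 1)"
    using m4 by (simp add: power_mult power2_eq_square algebra_simps)
  thus "m ^ 2 ^ k - 1 dvd m ^ 2 ^ Suc k - 1" by simp
qed

text \<open>For \<open>N = m\<^bsup>2\<^sup>k\<^esup> - 1\<close> the order of \<open>m\<close> is at most \<open>2\<^sup>k \<le> log\<^sub>2 (N + 1)\<close>, so the
  diameter is logarithmic in \<open>N\<close> and hence in the index.\<close>
lemma cay_diam_double_exp_le:
  assumes k: "k \<ge> 1"
  defines "X \<equiv> real (card (RCOSETS G (Gm_cong m (m ^ 2 ^ k - 1))))"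
  shows "real (cay_diam G {genA, genT} (Gm_cong m (m ^ 2 ^ k - 1))) \<le> real (m + 2) / ln 2 * (ln X + 1)"
proof -
  define N where "N = m ^ 2 ^ k - 1"
  have cop: "coprime N m" using arith_seq_double_exp k unfolding arith_seq_def N_def by simp
  have "0 < N" by (rule pos_if_coprime[OF cop])
  hence N: "1 \<le> real N" "m ^ 2 ^ k = N + 1" by (simp, simp add: N_def)
  have mN: "real m ^ 2 ^ k = real N + 1" using arg_cong[OF N(2), of real] by simp
  have "real (2 ^ k) * ln 2 \<le> real (2 ^ k) * ln (real m)" using two_le_m by (intro mult_left_mono) auto
  also have "\<dots> = ln (real m ^ 2 ^ k)" using two_le_m by (simp add: ln_realpow)
  also have "\<dots> = ln (real N + 1)" by (simp only: mN)
  also have "\<dots> \<le> ln (2 * real N)" using N(1) by (subst ln_le_cancel_iff) auto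
  also have "\<dots> \<le> ln (real N) + 1" using N(1) ln_2_less_1 by (simp add: ln_mult)
  finally have "real (2 ^ k) \<le> (ln (real N) + 1) / ln 2" by (simp add: field_simps)
  moreover have "ord N m \<le> 2 ^ k" using ord_power_sub_one_le[of m "2 ^ k"] two_le_m unfolding N_def by simp
  ultimately have "real (ord N m) \<le> (ln (real N) + 1) / ln 2" by linarith
  hence diam: "real (cay_diam G {genA, genT} (Gm_cong m N)) \<le> real (m + 2) / ln 2 * (ln (real N) + 1)"
    using cay_diam_Gm_cong_le[OF cop] by (simp add: field_simps)
  have "real N \<le> X"
    unfolding X_def N_def[symmetric] card_RCOSETS_Gm_cong[OF cop]
    using one_le_ord[OF cop] mult_right_mono[of 1 "real (ord N m)" "real N"] by simp
  hence "ln (real N) \<le> ln X" using N(1) by (subst ln_le_cancel_iff) auto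
  hence "real (m + 2) / ln 2 * (ln (real N) + 1) \<le> real (m + 2) / ln 2 * (ln X + 1)"
    by (intro mult_left_mono) auto
  with diam show ?thesis unfolding N_def by linarith
qed

theorem double_exp_not_property_D:
  assumes "0 < \<alpha>"
  shows "\<not> property_D G {genA, genT} (arith_box m (\<lambda>k. m ^ 2 ^ k - 1)) \<alpha>"
proof (rule not_property_D_if_diam_smallo)
  show "(\<lambda>x. real (m + 2) / ln 2 * (ln x + 1)) \<in> o(\<lambda>x. x powr \<alpha>)" using assms by real_asymp
qed (use card_RCOSETS_arith_box_unbounded[OF arith_seq_double_exp] cay_diam_double_exp_le in auto)

lemma Inter_level_subgroups:
  assumes cop: "\<And>k. k \<ge> 1 \<Longrightarrow> coprime (N k) m"
    and N_large: "\<And>k. k \<ge> 1 \<Longrightarrow> k < N k" and L_large: "\<And>k. k \<ge> 1 \<Longrightarrow> k < L k"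
  shows "(\<Inter>k\<in>{1..}. level_subgroup (N k) (L k)) = {\<one>\<^bsub>G\<^esub>}"
proof
  show "{\<one>\<^bsub>G\<^esub>} \<subseteq> (\<Inter>k\<in>{1..}. level_subgroup (N k) (L k))" by simp
next
  show "(\<Inter>k\<in>{1..}. level_subgroup (N k) (L k)) \<subseteq> {\<one>\<^bsub>G\<^esub>}"
  proof
    fix x assume x: "x \<in> (\<Inter>k\<in>{1..}. level_subgroup (N k) (L k))"
    obtain j r where jr: "x = (j, r)" by (cases x)
    have mem: "r \<in> Z" "int (L k) dvd j" "Zinv_dvd (N k) r" if "k \<ge> 1" for k
      using x that unfolding jr by auto
    have "j = 0" using mem(2) L_large by (rule eq_0_if_dvd_unbounded)
    obtain a t where at: "r = of_int a / of_nat m ^ t" using mem(1)[of 1] unfolding Zinv_iff by auto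
    have "int (N k) dvd a" if k: "k \<ge> 1" for k
    proof -
      have "Zinv_dvd (N k) (of_nat (m ^ t) * r)" using mem(3)[OF k] by (rule Zinv_dvd_mult[OF Zinv_of_nat])
      thus ?thesis unfolding at using Zinv_dvd_of_int_iff[OF cop[OF k]] by simp
    qed
    hence "a = 0" using N_large by (rule eq_0_if_dvd_unbounded)
    thus "x \<in> {\<one>\<^bsub>G\<^esub>}" using jr at \<open>j = 0\<close> by simp
  qed
qed

lemma box_space_level_subgroups:
  assumes cop: "\<And>k. k \<ge> 1 \<Longrightarrow> coprime (N k) m" and oL: "\<And>k. k \<ge> 1 \<Longrightarrow> ord (N k) m dvd L k"
    and N_dvd: "\<And>k. k \<ge> 1 \<Longrightarrow> N k dvd N (Suc k)" and L_dvd: "\<And>k. k \<ge> 1 \<Longrightarrow> L k dvd L (Suc k)"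
    and N_large: "\<And>k. k \<ge> 1 \<Longrightarrow> k < N k" and L_large: "\<And>k. k \<ge> 1 \<Longrightarrow> k < L k"
  shows "box_space G (\<lambda>k. level_subgroup (N k) (L k))"
  unfolding box_space_def
proof (intro conjI allI impI)
  fix k :: nat assume k: "k \<ge> 1"
  interpret Gm_quotient m "N k" "L k"
    using two_le_m cop[OF k] oL[OF k] L_large[OF k] by unfold_locales simp_all
  show "level_subgroup (N k) (L k) \<lhd> G" by (rule normal_level_subgroup[OF cop[OF k] oL[OF k]])
  show "finite (RCOSETS G (level_subgroup (N k) (L k)))" by (rule finite_RCOSETS)
  show "level_subgroup (N (Suc k)) (L (Suc k)) \<subseteq> level_subgroup (N k) (L k)"
    by (rule level_subgroup_antimono[OF N_dvd[OF k] L_dvd[OF k]])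
qed (use group_Gm Inter_level_subgroups[OF cop N_large L_large] in simp_all)

lemma property_D_level_subgroups:
  assumes cop: "\<And>k. k \<ge> 1 \<Longrightarrow> coprime (N k) m" and oL: "\<And>k. k \<ge> 1 \<Longrightarrow> ord (N k) m dvd L k"
    and L2: "\<And>k. k \<ge> 1 \<Longrightarrow> 2 \<le> L k" and \<alpha>: "0 < \<alpha>" "\<alpha> < 1"
    and NL: "\<And>k. k \<ge> 1 \<Longrightarrow> real (N k) powr (\<alpha> / (1 - \<alpha>)) \<le> real (L k)"
  shows "property_D G {genA, genT} (\<lambda>k. level_subgroup (N k) (L k)) \<alpha>"
  unfolding property_D_def
proof (intro exI[of _ "1/4"] conjI allI impI)
  fix k :: nat assume k: "k \<ge> 1"
  interpret Gm_quotient m "N k" "L k"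
    using two_le_m cop[OF k] oL[OF k] L2[OF k] by unfold_locales simp_all
  define l where "l = real (L k)"
  define n where "n = real (N k)"
  have l2: "l \<ge> 2" using L2[OF k] unfolding l_def by simp
  have n1: "n \<ge> 1" using pos_if_coprime[OF cop[OF k]] unfolding n_def by simp
  have "n powr \<alpha> = (n powr (\<alpha> / (1 - \<alpha>))) powr (1 - \<alpha>)" using \<alpha> by (simp add: powr_powr)
  also have "\<dots> \<le> l powr (1 - \<alpha>)" using NL[OF k] \<alpha> n1 unfolding l_def n_def by (intro powr_mono2) auto
  finally have "(l * n) powr \<alpha> \<le> l powr \<alpha> * l powr (1 - \<alpha>)"
    using l2 n1 by (simp add: powr_mult mult_left_mono)
  also have "\<dots> = l" using l2 by (simp add: powr_add[symmetric])
  also have "l / 4 \<le> real (L k div 2)" using L2[OF k] unfolding l_def by linarith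
  hence "l \<le> 4 * real (cay_diam G {genA, genT} (level_subgroup (N k) (L k)))"
    using cay_diam_ge by linarith
  finally show "1/4 * real (card (RCOSETS G (level_subgroup (N k) (L k)))) powr \<alpha>
      \<le> real (cay_diam G {genA, genT} (level_subgroup (N k) (L k)))"
    unfolding card_RCOSETS l_def n_def by simp
qed (simp)

text \<open>The levels \<open>L\<^sub>k = (N\<^sub>k\<^sup>e)!\<close> are multiples of the order of \<open>m\<close> modulo \<open>N\<^sub>k\<close> that grow
  fast enough for the index \<open>L\<^sub>k N\<^sub>k\<close> to be at most \<open>L\<^sub>k\<^bsup>1/\<alpha>\<^esup>\<close>, while the diameter is at least
  \<open>L\<^sub>k / 2\<close>.\<close>
theorem covering_box_space_property_D:
  assumes \<alpha>: "0 < \<alpha>" "\<alpha> < 1" and N: "arith_seq m N"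
  shows "\<exists>M. box_space G M \<and> property_D G {genA, genT} M \<alpha> \<and> (\<forall>k\<ge>1. M k \<subseteq> Gm_cong m (N k))"
proof (intro exI conjI allI impI)
  define e where "e = nat \<lceil>\<alpha> / (1 - \<alpha>)\<rceil> + 1"
  define L :: "nat \<Rightarrow> nat" where "L k = fact (N k ^ e)" for k
  have N2: "2 \<le> N k" "coprime (N k) m" "N k dvd N (Suc k)" "N k < N (Suc k)" if "k \<ge> 1" for k
    using N that unfolding arith_seq_def by auto
  have NNe: "N k \<le> N k ^ e" if "k \<ge> 1" for k using N2[OF that] by (simp add: e_def self_le_power)
  have NL: "N k \<le> L k" if "k \<ge> 1" for k using NNe[OF that] fact_ge_self[of "N k ^ e"] by (simp add: L_def)
  have oL: "ord (N k) m dvd L k" if "k \<ge> 1" for k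
    unfolding L_def using one_le_ord[OF N2(2)[OF that]] ord_le_modulus[OF N2(2)[OF that]] NNe[OF that] N2(1)[OF that]
    by (intro dvd_fact) auto
  show "box_space G (\<lambda>k. level_subgroup (N k) (L k))"
  proof (rule box_space_level_subgroups[of N L, OF N2(2) oL N2(3)])
    show "L k dvd L (Suc k)" if "k \<ge> 1" for k
      unfolding L_def using N2(4)[OF that] by (intro fact_dvd power_mono) auto
    show "k < N k" if "k \<ge> 1" for k by (rule arith_seq_ge[OF N that])
    thus "k < L k" if "k \<ge> 1" for k using NL that by (meson order.strict_trans2)
  qed
  show "property_D G {genA, genT} (\<lambda>k. level_subgroup (N k) (L k)) \<alpha>"
  proof (rule property_D_level_subgroups[of N L, OF N2(2) oL _ \<alpha>])
    show "2 \<le> L k" if "k \<ge> 1" for k using NL[OF that] N2(1)[OF that] by linarith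
    show "real (N k) powr (\<alpha> / (1 - \<alpha>)) \<le> real (L k)" if "k \<ge> 1" for k
    proof -
      have "real (N k) powr (\<alpha> / (1 - \<alpha>)) \<le> real (N k) powr real e"
        using N2(1)[OF that] by (intro powr_mono) (auto simp: e_def, linarith)
      also have "\<dots> = real (N k ^ e)" using N2(1)[OF that] by (simp add: powr_realpow)
      also have "\<dots> \<le> real (L k)" unfolding L_def using fact_ge_self by (simp only: of_nat_le_iff)
      finally show ?thesis .
    qed
  qed
  fix k :: nat assume "k \<ge> 1"
  thus "level_subgroup (N k) (L k) \<subseteq> Gm_cong m (N k)"
    unfolding Gm_cong_eq_level_subgroup[OF N2(2)[OF \<open>k \<ge> 1\<close>]]
    by (intro level_subgroup_antimono oL) simp_all
qed

end

theorem theorem1p2: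
  fixes m :: nat
  assumes "m \<ge> 2"
  shows
    "(\<forall>N \<alpha>. arith_seq m N \<and> 0 < \<alpha> \<and> \<alpha> \<le> 1 \<and>
            property_D (Gm m) {genA, genT} (arith_box m N) \<alpha> \<longrightarrow> \<alpha> \<le> 1/2)
   \<and> ((\<exists>N. arith_seq m N \<and> property_D (Gm m) {genA, genT} (arith_box m N) (1/2))
      \<and> (let N = (\<lambda>k. (m^2 - 1)^k) in
           arith_seq m N \<and> property_D (Gm m) {genA, genT} (arith_box m N) (1/2) \<and>
           (\<forall>k\<ge>1. ord (N k) m = 2 * (m^2 - 1)^(k - 1))))
   \<and> ((\<exists>N. arith_seq m N \<and>
          (\<forall>\<alpha>. 0 < \<alpha> \<and> \<alpha> \<le> 1/2 \<longrightarrow> \<not> property_D (Gm m) {genA, genT} (arith_box m N) \<alpha>))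
      \<and> (let N = (\<lambda>k. m^(2^k) - 1) in
           arith_seq m N \<and>
           (\<forall>\<alpha>. 0 < \<alpha> \<and> \<alpha> \<le> 1/2 \<longrightarrow> \<not> property_D (Gm m) {genA, genT} (arith_box m N) \<alpha>)))
   \<and> (\<forall>\<alpha>. 0 < \<alpha> \<and> \<alpha> < 1 \<longrightarrow>
        (\<forall>N. arith_seq m N \<longrightarrow>
          (\<exists>M. box_space (Gm m) M \<and> property_D (Gm m) {genA, genT} M \<alpha> \<and>
               (\<forall>k\<ge>1. M k \<subseteq> Gm_cong m (N k)))))"
proof -
  interpret BS1m m by unfold_locales (rule assms)
  show ?thesis
    unfolding Let_def
    using arith_box_property_D_le_half
      arith_seq_power_square_sub_one power_square_sub_one_property_D_half
      ord_power_square_sub_one[OF assms]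
      arith_seq_double_exp double_exp_not_property_D
      covering_box_space_property_D
    by blast
qed

end
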